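(* Let $R_1$ and $R_2$ be finite commutative principal ideal rings with unity, and let $R=R_1\times R_2$. Suppose $\operatorname{diam}(\Gamma(R_1))=\operatorname{diam}(\Gamma(R_2))=0$. Then $\overline{\Gamma(R)}$ is a divisor graph if and only if at least one of $R_1$ and $R_2$ is an integral domain.
   Context: For a commutative ring $S$ with unity, $Z(S)$ denotes its set of zero divisors. The zero divisor graph $\Gamma(S)$ is the simple graph with vertex set $Z(S)\setminus\{0\}$, distinct $a,b$ adjacent iff $ab=0$; its complement $\overline{\Gamma(S)}$ has the same vertex set with distinct $a,b$ adjacent iff $ab\neq 0$. The diameter of a graph is the maximum distance (number of edges in a shortest path) between pairs of vertices. In the paper's usage, $\operatorname{diam}(\Gamma(S))=0$ means $\Gamma(S)$ has at most one vertex, i.e. $S$ has at most one nonzero zero divisor (this includes the case that $S$ is an integral domain). For a nonempty set $T$ of positive integers, the divisor graph $G(T)$ has vertex set $T$, with distinct $i,j$ adjacent iff $i\mid j$ or $j\mid i$; a graph is a divisor graph if it is isomorphic to some $G(T)$. *)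

theory Defs
  imports "HOL-Algebra.Algebra"
begin

definition principal_ideal_ring :: "('a, 'm) ring_scheme \<Rightarrow> bool" where
  "principal_ideal_ring R \<longleftrightarrow> cring R \<and> (\<forall>I. ideal I R \<longrightarrow> principalideal I R)"

definition zero_divisors :: "('a, 'm) ring_scheme \<Rightarrow> 'a set" where
  "zero_divisors R = {a \<in> carrier R. \<exists>b \<in> carrier R. b \<noteq> \<zero>\<^bsub>R\<^esub> \<and> a \<otimes>\<^bsub>R\<^esub> b = \<zero>\<^bsub>R\<^esub>}"

definition zdg_vertices :: "('a, 'm) ring_scheme \<Rightarrow> 'a set" where
  "zdg_vertices R = zero_divisors R - {\<zero>\<^bsub>R\<^esub>}"

definition zdg_adj :: "('a, 'm) ring_scheme \<Rightarrow> 'a \<Rightarrow> 'a \<Rightarrow> bool" where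
  "zdg_adj R a b \<longleftrightarrow> a \<in> zdg_vertices R \<and> b \<in> zdg_vertices R \<and> a \<noteq> b \<and> a \<otimes>\<^bsub>R\<^esub> b = \<zero>\<^bsub>R\<^esub>"

definition zdg_compl_adj :: "('a, 'm) ring_scheme \<Rightarrow> 'a \<Rightarrow> 'a \<Rightarrow> bool" where
  "zdg_compl_adj R a b \<longleftrightarrow> a \<in> zdg_vertices R \<and> b \<in> zdg_vertices R \<and> a \<noteq> b \<and> a \<otimes>\<^bsub>R\<^esub> b \<noteq> \<zero>\<^bsub>R\<^esub>"

text \<open>Paper's convention: diam(Gamma(S)) = 0 iff Gamma(S) has at most one vertex.\<close>
definition zdg_diam_zero :: "('a, 'm) ring_scheme \<Rightarrow> bool" where
  "zdg_diam_zero R \<longleftrightarrow> finite (zdg_vertices R) \<and> card (zdg_vertices R) \<le> 1"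

definition is_divisor_graph :: "'v set \<Rightarrow> ('v \<Rightarrow> 'v \<Rightarrow> bool) \<Rightarrow> bool" where
  "is_divisor_graph V adj \<longleftrightarrow>
     (\<exists>T :: nat set. T \<noteq> {} \<and> (\<forall>t \<in> T. 0 < t) \<and>
        (\<exists>f. bij_betw f V T \<and>
             (\<forall>x \<in> V. \<forall>y \<in> V. x \<noteq> y \<longrightarrow> (adj x y \<longleftrightarrow> (f x dvd f y \<or> f y dvd f x)))))"

end

theory Submission
  imports Defs "HOL-Library.Product_Order"
begin

text \<open>A ring with diam(Gamma) = 0 is either a domain or has a unique nonzero zero divisor a,
  and then a^2 = 0. If R1 is a domain, the vertices of the complement of Gamma(R1 x R2) are
  the clique of all (x, 0), the clique of all (0, y) with y not nilpotent, the vertex (0, b)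
  and the clique of all (x, b), where b is the nilpotent of R2 if there is one. These can be
  labelled by triples of exponents ordered componentwise, i.e. by numbers 2^i 3^j 5^k ordered
  by divisibility. If both factors have nilpotents a and b, the seven vertices built from
  0, 1, a, b carry a cycle of edges whose orientations by divisibility force each other,
  and going around the cycle one edge is forced to point both ways.\<close>

lemma power_exponent_le_if_dvd_coprime:
  fixes k :: nat
  assumes "2 \<le> k" and "coprime k n" and "k ^ a * m dvd k ^ b * n"
  shows "a \<le> b"
proof -
  have "k ^ a dvd k ^ b * n"
    using assms(3) dvd_mult_left by blast
  then have "k ^ a dvd k ^ b"
    using assms(2) by (simp add: coprime_dvd_mult_left_iff)
  then show ?thesis
    using assms(1) by (simp add: dvd_power_iff_le)
qed

lemma pow_2_3_5_dvd_iff: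
  "(2::nat) ^ a * 3 ^ b * 5 ^ c dvd 2 ^ a' * 3 ^ b' * 5 ^ c' \<longleftrightarrow> a \<le> a' \<and> b \<le> b' \<and> c \<le> c'"
  (is "?lhs \<longleftrightarrow> _")
proof
  assume ?lhs
  have "coprime (2::nat) 3" "coprime (2::nat) 5" "coprime (3::nat) 5"
    by (simp_all add: coprime_iff_gcd_eq_1 gcd_non_0_nat)
  then have coprime: "coprime (2::nat) (3 ^ b' * 5 ^ c')" "coprime (3::nat) (2 ^ a' * 5 ^ c')"
    "coprime (5::nat) (2 ^ a' * 3 ^ b')"
    by (simp_all add: coprime_commute)
  have "(2::nat) ^ a * (3 ^ b * 5 ^ c) dvd 2 ^ a' * (3 ^ b' * 5 ^ c')"
    and "(3::nat) ^ b * (2 ^ a * 5 ^ c) dvd 3 ^ b' * (2 ^ a' * 5 ^ c')"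
    and "(5::nat) ^ c * (2 ^ a * 3 ^ b) dvd 5 ^ c' * (2 ^ a' * 3 ^ b')"
    using \<open>?lhs\<close> by (simp_all add: ac_simps)
  from this[THEN power_exponent_le_if_dvd_coprime[rotated 2]] coprime
  show "a \<le> a' \<and> b \<le> b' \<and> c \<le> c'"
    by simp
next
  assume "a \<le> a' \<and> b \<le> b' \<and> c \<le> c'"
  then show ?lhs
    by (intro mult_dvd_mono le_imp_power_dvd) auto
qed

lemma is_divisor_graph_if_componentwise_embedding:
  fixes h :: "'v \<Rightarrow> nat \<times> nat \<times> nat"
  assumes "V \<noteq> {}" and "inj_on h V"
    and "\<And>x y. x \<in> V \<Longrightarrow> y \<in> V \<Longrightarrow> x \<noteq> y \<Longrightarrow> adj x y \<longleftrightarrow> h x \<le> h y \<or> h y \<le> h x"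
  shows "is_divisor_graph V adj"
proof -
  define f :: "'v \<Rightarrow> nat" where "f v = (case h v of (a, b, c) \<Rightarrow> 2 ^ a * 3 ^ b * 5 ^ c)" for v
  have f_dvd: "f x dvd f y \<longleftrightarrow> h x \<le> h y" for x y
    by (simp add: f_def pow_2_3_5_dvd_iff split: prod.split)
  have "inj_on f V"
    using assms(2) unfolding inj_on_def by (metis dvd_refl f_dvd order.antisym)
  moreover have "\<forall>t \<in> f ` V. 0 < t"
    by (auto simp: f_def split: prod.split)
  ultimately show ?thesis
    unfolding is_divisor_graph_def using assms(1,3) f_dvd
    by (intro exI[of _ "f ` V"] conjI exI[of _ f] inj_on_imp_bij_betw ballI impI) auto
qed

lemma is_divisor_graphE:
  assumes "is_divisor_graph V adj"
  obtains f :: "'v \<Rightarrow> nat" where "inj_on f V"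
    and "\<And>x y. x \<in> V \<Longrightarrow> y \<in> V \<Longrightarrow> x \<noteq> y \<Longrightarrow> adj x y \<longleftrightarrow> f x dvd f y \<or> f y dvd f x"
proof -
  obtain T and f :: "'v \<Rightarrow> nat" where "bij_betw f V T"
    and "\<forall>x \<in> V. \<forall>y \<in> V. x \<noteq> y \<longrightarrow> (adj x y \<longleftrightarrow> (f x dvd f y \<or> f y dvd f x))"
    using assms unfolding is_divisor_graph_def by blast
  then show thesis
    using that unfolding bij_betw_def by blast
qed

lemma is_divisor_graph_transfer:
  assumes "is_divisor_graph V adj" and "bij_betw h W V"
    and "\<And>x y. x \<in> W \<Longrightarrow> y \<in> W \<Longrightarrow> adj' x y \<longleftrightarrow> adj (h x) (h y)"
  shows "is_divisor_graph W adj'"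
proof -
  obtain T f where "T \<noteq> {}" "\<forall>t \<in> T. 0 < (t::nat)" "bij_betw f V T"
    and f_adj: "\<forall>x \<in> V. \<forall>y \<in> V. x \<noteq> y \<longrightarrow> (adj x y \<longleftrightarrow> (f x dvd f y \<or> f y dvd f x))"
    using assms(1) unfolding is_divisor_graph_def by blast
  moreover have "bij_betw (f \<circ> h) W T"
    using \<open>bij_betw f V T\<close> assms(2) bij_betw_trans by blast
  moreover have "h x \<in> V" "h x \<noteq> h y" if "x \<in> W" "y \<in> W" "x \<noteq> y" for x y
    using assms(2) that by (auto simp: bij_betw_def inj_on_def)
  ultimately show ?thesis
    unfolding is_divisor_graph_def using assms(3) by (intro exI[of _ T] exI[of _ "f \<circ> h"]) auto
qed

lemma dvd_iff_dvd_if_incomparable: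
  fixes p q r :: "'a::comm_monoid_mult"
  assumes "p dvd q \<or> q dvd p" and "q dvd r \<or> r dvd q" and "\<not> p dvd r" and "\<not> r dvd p"
  shows "p dvd q \<longleftrightarrow> r dvd q" and "q dvd p \<longleftrightarrow> q dvd r"
  using assms dvd_trans by blast+

text \<open>Orient every edge by divisibility. Two edges sharing a vertex whose other ends are
  non-adjacent are oriented alike towards the shared vertex, so the orientation of
  each edge of the chain v1w, v1v2, v1v3, v4v3, v5v3, v5v2, v5v6, v4v6, wv6 forces
  that of the next, and the last one forces w v1 to point the same way as v1 w.\<close>
lemma not_is_divisor_graph_if_forcing_cycle:
  assumes "v1 \<in> V" "w \<in> V" "v2 \<in> V" "v3 \<in> V" "v4 \<in> V" "v5 \<in> V" "v6 \<in> V"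
    and "distinct [v1, w, v2, v3, v4, v5, v6]"
    and "adj v1 w" "adj v1 v2" "adj v1 v3" "adj v3 v4" "adj v3 v5" "adj v5 v2" "adj v5 v6"
      "adj v6 v4" "adj v6 w"
    and "\<not> adj w v2" "\<not> adj v2 v3" "\<not> adj v1 v4" "\<not> adj v4 v5" "\<not> adj v2 v6"
      "\<not> adj v4 w" "\<not> adj v6 v1"
  shows "\<not> is_divisor_graph V adj"
proof
  assume "is_divisor_graph V adj"
  then obtain f :: "_ \<Rightarrow> nat" where "inj_on f V"
    and f_adj: "\<And>x y. x \<in> V \<Longrightarrow> y \<in> V \<Longrightarrow> x \<noteq> y \<Longrightarrow> adj x y \<longleftrightarrow> f x dvd f y \<or> f y dvd f x"
    by (elim is_divisor_graphE) blast
  have E: "f v1 dvd f w \<or> f w dvd f v1" "f v1 dvd f v2 \<or> f v2 dvd f v1"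
    "f v1 dvd f v3 \<or> f v3 dvd f v1" "f v3 dvd f v4 \<or> f v4 dvd f v3"
    "f v3 dvd f v5 \<or> f v5 dvd f v3" "f v5 dvd f v2 \<or> f v2 dvd f v5"
    "f v5 dvd f v6 \<or> f v6 dvd f v5" "f v6 dvd f v4 \<or> f v4 dvd f v6"
    "f v6 dvd f w \<or> f w dvd f v6"
    using assms f_adj[symmetric] by (auto simp: eq_commute)
  have N: "\<not> f w dvd f v2" "\<not> f v2 dvd f w" "\<not> f v2 dvd f v3" "\<not> f v3 dvd f v2"
    "\<not> f v1 dvd f v4" "\<not> f v4 dvd f v1" "\<not> f v4 dvd f v5" "\<not> f v5 dvd f v4"
    "\<not> f v2 dvd f v6" "\<not> f v6 dvd f v2" "\<not> f v4 dvd f w" "\<not> f w dvd f v4"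
    "\<not> f v6 dvd f v1" "\<not> f v1 dvd f v6"
    using assms f_adj[symmetric] by (auto simp: eq_commute)
  have "f v1 dvd f w \<longleftrightarrow> f v1 dvd f v2" "f v1 dvd f v2 \<longleftrightarrow> f v1 dvd f v3"
    "f v1 dvd f v3 \<longleftrightarrow> f v4 dvd f v3" "f v4 dvd f v3 \<longleftrightarrow> f v5 dvd f v3"
    "f v5 dvd f v3 \<longleftrightarrow> f v5 dvd f v2" "f v5 dvd f v2 \<longleftrightarrow> f v5 dvd f v6"
    "f v5 dvd f v6 \<longleftrightarrow> f v4 dvd f v6" "f v4 dvd f v6 \<longleftrightarrow> f w dvd f v6"
    "f w dvd f v6 \<longleftrightarrow> f w dvd f v1"
    using E N dvd_iff_dvd_if_incomparable by metis+
  moreover have "f v1 \<noteq> f w"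
    using assms \<open>inj_on f V\<close> by (auto simp: inj_on_def)
  ultimately show False
    using E(1) dvd_antisym by blast
qed

lemma RDirProd_zero [simp]: "\<zero>\<^bsub>RDirProd R S\<^esub> = (\<zero>\<^bsub>R\<^esub>, \<zero>\<^bsub>S\<^esub>)"
  by (simp add: RDirProd_def DirProd_def monoid.defs)

lemma RDirProd_mult [simp]: "(a, b) \<otimes>\<^bsub>RDirProd R S\<^esub> (c, d) = (a \<otimes>\<^bsub>R\<^esub> c, b \<otimes>\<^bsub>S\<^esub> d)"
  by (simp add: RDirProd_def DirProd_def monoid.defs)

lemma (in ring) zero_divisors_eq_insert_zero:
  assumes "\<one> \<noteq> \<zero>"
  shows "zero_divisors R = insert \<zero> (zdg_vertices R)"
  using assms by (auto simp: zero_divisors_def zdg_vertices_def intro: bexI[of _ \<one>])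

lemma zero_divisors_RDirProd:
  assumes "ring A" and "ring B"
  shows "zero_divisors (RDirProd A B) =
    {(x, y). x \<in> carrier A \<and> y \<in> carrier B \<and> (x \<in> zero_divisors A \<or> y \<in> zero_divisors B)}"
proof -
  interpret A: ring A by (rule assms(1))
  interpret B: ring B by (rule assms(2))
  show ?thesis
  proof (intro equalityI subsetI)
    fix p assume "p \<in> zero_divisors (RDirProd A B)"
    then obtain x y x' y' where "p = (x, y)" "x \<in> carrier A" "y \<in> carrier B"
      "x' \<in> carrier A" "y' \<in> carrier B" "(x', y') \<noteq> (\<zero>\<^bsub>A\<^esub>, \<zero>\<^bsub>B\<^esub>)"
      "x \<otimes>\<^bsub>A\<^esub> x' = \<zero>\<^bsub>A\<^esub>" "y \<otimes>\<^bsub>B\<^esub> y' = \<zero>\<^bsub>B\<^esub>"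
      unfolding zero_divisors_def RDirProd_carrier by auto
    then show "p \<in> {(x, y). x \<in> carrier A \<and> y \<in> carrier B \<and>
        (x \<in> zero_divisors A \<or> y \<in> zero_divisors B)}"
      unfolding zero_divisors_def by blast
  next
    fix p assume "p \<in> {(x, y). x \<in> carrier A \<and> y \<in> carrier B \<and>
        (x \<in> zero_divisors A \<or> y \<in> zero_divisors B)}"
    then obtain x y where p: "p = (x, y)" "x \<in> carrier A" "y \<in> carrier B"
      and "x \<in> zero_divisors A \<or> y \<in> zero_divisors B" by blast
    then consider x' where "x' \<in> carrier A" "x' \<noteq> \<zero>\<^bsub>A\<^esub>" "x \<otimes>\<^bsub>A\<^esub> x' = \<zero>\<^bsub>A\<^esub>"
      | y' where "y' \<in> carrier B" "y' \<noteq> \<zero>\<^bsub>B\<^esub>" "y \<otimes>\<^bsub>B\<^esub> y' = \<zero>\<^bsub>B\<^esub>"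
      unfolding zero_divisors_def by blast
    then show "p \<in> zero_divisors (RDirProd A B)"
    proof cases
      case 1
      then show ?thesis
        using p unfolding zero_divisors_def RDirProd_carrier
        by (intro CollectI conjI bexI[of _ "(x', \<zero>\<^bsub>B\<^esub>)"]) auto
    next
      case 2
      then show ?thesis
        using p unfolding zero_divisors_def RDirProd_carrier
        by (intro CollectI conjI bexI[of _ "(\<zero>\<^bsub>A\<^esub>, y')"]) auto
    qed
  qed
qed

lemma zdg_vertices_RDirProd:
  assumes "ring A" and "ring B" and "\<one>\<^bsub>A\<^esub> \<noteq> \<zero>\<^bsub>A\<^esub>" and "\<one>\<^bsub>B\<^esub> \<noteq> \<zero>\<^bsub>B\<^esub>"
  shows "(x, y) \<in> zdg_vertices (RDirProd A B) \<longleftrightarrow>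
    x \<in> carrier A \<and> y \<in> carrier B \<and> (x, y) \<noteq> (\<zero>\<^bsub>A\<^esub>, \<zero>\<^bsub>B\<^esub>) \<and>
    (x = \<zero>\<^bsub>A\<^esub> \<or> x \<in> zdg_vertices A \<or> y = \<zero>\<^bsub>B\<^esub> \<or> y \<in> zdg_vertices B)"
  unfolding zdg_vertices_def[of "RDirProd A B"] zero_divisors_RDirProd[OF assms(1,2)]
    ring.zero_divisors_eq_insert_zero[OF assms(1,3)] ring.zero_divisors_eq_insert_zero[OF assms(2,4)]
  by auto

lemma zdg_compl_adj_RDirProd:
  "zdg_compl_adj (RDirProd A B) (x, y) (x', y') \<longleftrightarrow>
    (x, y) \<in> zdg_vertices (RDirProd A B) \<and> (x', y') \<in> zdg_vertices (RDirProd A B) \<and>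
    (x, y) \<noteq> (x', y') \<and> (x \<otimes>\<^bsub>A\<^esub> x' \<noteq> \<zero>\<^bsub>A\<^esub> \<or> y \<otimes>\<^bsub>B\<^esub> y' \<noteq> \<zero>\<^bsub>B\<^esub>)"
  by (auto simp: zdg_compl_adj_def)

lemma (in cring) domain_iff_zdg_vertices_empty:
  assumes "\<one> \<noteq> \<zero>"
  shows "domain R \<longleftrightarrow> zdg_vertices R = {}"
proof
  assume "domain R"
  then show "zdg_vertices R = {}"
    by (auto simp: zdg_vertices_def zero_divisors_def domain.integral_iff)
next
  assume "zdg_vertices R = {}"
  then have "a = \<zero> \<or> b = \<zero>" if "a \<otimes> b = \<zero>" "a \<in> carrier R" "b \<in> carrier R" for a b
    using that by (auto simp: zdg_vertices_def zero_divisors_def)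
  then show "domain R"
    using assms by unfold_locales auto
qed

lemma zdg_diam_zero_vertex_unique:
  assumes "zdg_diam_zero R" and "u \<in> zdg_vertices R" and "v \<in> zdg_vertices R"
  shows "u = v"
proof -
  have "finite (zdg_vertices R)" "card (zdg_vertices R) \<le> Suc 0"
    using assms(1) unfolding zdg_diam_zero_def by simp_all
  then show ?thesis
    using assms(2,3) card_le_Suc0_iff_eq by blast
qed

lemma (in cring) diam_zero_mult_eq_zero_iff:
  assumes "zdg_diam_zero R" and "x \<in> carrier R" and "y \<in> carrier R"
  shows "x \<otimes> y = \<zero> \<longleftrightarrow> x = \<zero> \<or> y = \<zero> \<or> (x \<in> zdg_vertices R \<and> y \<in> zdg_vertices R)"
proof -
  note unique = zdg_diam_zero_vertex_unique[OF assms(1)]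
  have square_zero: "u \<otimes> u = \<zero>" if uV: "u \<in> zdg_vertices R" for u
  proof -
    obtain v where v: "v \<in> carrier R" "v \<noteq> \<zero>" "u \<otimes> v = \<zero>" and u: "u \<in> carrier R" "u \<noteq> \<zero>"
      using uV by (auto simp: zdg_vertices_def zero_divisors_def)
    then have "v \<otimes> u = \<zero>"
      by (simp add: m_comm)
    then have "v \<in> zdg_vertices R"
      using u v by (auto simp: zdg_vertices_def zero_divisors_def)
    then show ?thesis
      using unique uV v by blast
  qed
  show ?thesis
  proof
    assume "x \<otimes> y = \<zero>"
    moreover have "y \<otimes> x = x \<otimes> y"
      using assms(2,3) by (simp add: m_comm)
    ultimately show "x = \<zero> \<or> y = \<zero> \<or> (x \<in> zdg_vertices R \<and> y \<in> zdg_vertices R)"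
      using assms(2,3) unfolding zdg_vertices_def zero_divisors_def by auto
  next
    assume "x = \<zero> \<or> y = \<zero> \<or> (x \<in> zdg_vertices R \<and> y \<in> zdg_vertices R)"
    then show "x \<otimes> y = \<zero>"
      using assms(2,3) unique square_zero by auto
  qed
qed

text \<open>In the labelling h below, e and g number A and B below n and m, so the labels of the
  vertices (x, b) lie above those of all (x', 0) and (0, y), while the last coordinate keeps
  (0, b) incomparable with the (x, b) and the (x', 0).\<close>
lemma is_divisor_graph_RDirProd_domain:
  assumes "domain A" and "cring B" and "\<one>\<^bsub>B\<^esub> \<noteq> \<zero>\<^bsub>B\<^esub>" and "zdg_diam_zero B"
    and "finite (carrier A)" and "finite (carrier B)"
  shows "is_divisor_graph (zdg_vertices (RDirProd A B)) (zdg_compl_adj (RDirProd A B))"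
proof -
  interpret A: domain A by (rule assms(1))
  interpret B: cring B by (rule assms(2))
  let ?V = "zdg_vertices (RDirProd A B)" and ?N = "zdg_vertices B"
  have "zdg_vertices A = {}"
    using A.domain_iff_zdg_vertices_empty A.one_not_zero assms(1) by blast
  then have vertex_iff: "(x, y) \<in> ?V \<longleftrightarrow> x \<in> carrier A \<and> y \<in> carrier B \<and>
      (x, y) \<noteq> (\<zero>\<^bsub>A\<^esub>, \<zero>\<^bsub>B\<^esub>) \<and> (x = \<zero>\<^bsub>A\<^esub> \<or> y = \<zero>\<^bsub>B\<^esub> \<or> y \<in> ?N)" for x y
    using zdg_vertices_RDirProd[OF A.ring_axioms B.ring_axioms A.one_not_zero assms(3)] by auto
  have adj_iff: "zdg_compl_adj (RDirProd A B) (x, y) (x', y') \<longleftrightarrow>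
      (x \<noteq> \<zero>\<^bsub>A\<^esub> \<and> x' \<noteq> \<zero>\<^bsub>A\<^esub>) \<or> (y \<noteq> \<zero>\<^bsub>B\<^esub> \<and> y' \<noteq> \<zero>\<^bsub>B\<^esub> \<and> \<not> (y \<in> ?N \<and> y' \<in> ?N))"
    if "(x, y) \<in> ?V" "(x', y') \<in> ?V" "(x, y) \<noteq> (x', y')" for x y x' y'
    using that vertex_iff[of x y] vertex_iff[of x' y'] A.integral_iff
      B.diam_zero_mult_eq_zero_iff[OF assms(4), of y y']
    by (simp add: zdg_compl_adj_RDirProd)
  obtain e and n :: nat where e: "e ` carrier A = {..<n}" "inj_on e (carrier A)"
    using finite_imp_inj_to_nat_seg[OF assms(5)] by (auto simp: lessThan_def)
  obtain g and m :: nat where g: "g ` carrier B = {..<m}" "inj_on g (carrier B)"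
    using finite_imp_inj_to_nat_seg[OF assms(6)] by (auto simp: lessThan_def)
  define h :: "'a \<times> 'c \<Rightarrow> nat \<times> nat \<times> nat" where "h p = (case p of (x, y) \<Rightarrow>
      if y = \<zero>\<^bsub>B\<^esub> then (0, Suc (e x), 0)
      else if x \<noteq> \<zero>\<^bsub>A\<^esub> then (m, n + Suc (e x), 0)
      else if y \<in> ?N then (m, 0, 1)
      else (Suc (g y), 0, 0))" for p
  have "h p \<noteq> h q \<and> (zdg_compl_adj (RDirProd A B) p q \<longleftrightarrow> h p \<le> h q \<or> h q \<le> h p)"
    if "p \<in> ?V" "q \<in> ?V" "p \<noteq> q" for p q
  proof -
    obtain x y x' y' where pq: "p = (x, y)" "q = (x', y')" by fastforce
    have "x \<in> carrier A" "y \<in> carrier B" "x' \<in> carrier A" "y' \<in> carrier B"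
      using that vertex_iff unfolding pq by auto
    then have "e x < n" "e x' < n" "g y < m" "g y' < m"
      and "e x = e x' \<longleftrightarrow> x = x'" "g y = g y' \<longleftrightarrow> y = y'"
      using e g by (auto simp: inj_on_eq_iff)
    moreover have "y \<in> ?N \<Longrightarrow> y' \<in> ?N \<Longrightarrow> y = y'"
      using zdg_diam_zero_vertex_unique[OF assms(4)] by blast
    ultimately show ?thesis
      using that vertex_iff adj_iff unfolding pq h_def by auto
  qed
  moreover have "(\<one>\<^bsub>A\<^esub>, \<zero>\<^bsub>B\<^esub>) \<in> ?V"
    using vertex_iff by simp
  ultimately show ?thesis
    by (intro is_divisor_graph_if_componentwise_embedding[where h = h]) (auto simp: inj_on_def)
qed

lemma is_divisor_graph_RDirProd_swap:
  assumes "ring A" and "ring B" and "\<one>\<^bsub>A\<^esub> \<noteq> \<zero>\<^bsub>A\<^esub>" and "\<one>\<^bsub>B\<^esub> \<noteq> \<zero>\<^bsub>B\<^esub>"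
    and "is_divisor_graph (zdg_vertices (RDirProd B A)) (zdg_compl_adj (RDirProd B A))"
  shows "is_divisor_graph (zdg_vertices (RDirProd A B)) (zdg_compl_adj (RDirProd A B))"
proof (rule is_divisor_graph_transfer[OF assms(5), where h = prod.swap])
  note vertex_iff = zdg_vertices_RDirProd[OF assms(1-4)] zdg_vertices_RDirProd[OF assms(2,1,4,3)]
  show "bij_betw prod.swap (zdg_vertices (RDirProd A B)) (zdg_vertices (RDirProd B A))"
    by (rule bij_betw_byWitness[where f' = prod.swap]) (auto simp: vertex_iff)
  fix p q
  show "zdg_compl_adj (RDirProd A B) p q \<longleftrightarrow>
      zdg_compl_adj (RDirProd B A) (prod.swap p) (prod.swap q)"
    by (cases p, cases q) (auto simp: zdg_compl_adj_RDirProd vertex_iff)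
qed

lemma not_is_divisor_graph_RDirProd_square_zero:
  assumes "ring A" and "ring B"
    and "a \<in> carrier A" "a \<noteq> \<zero>\<^bsub>A\<^esub>" "a \<otimes>\<^bsub>A\<^esub> a = \<zero>\<^bsub>A\<^esub>"
    and "b \<in> carrier B" "b \<noteq> \<zero>\<^bsub>B\<^esub>" "b \<otimes>\<^bsub>B\<^esub> b = \<zero>\<^bsub>B\<^esub>"
  shows "\<not> is_divisor_graph (zdg_vertices (RDirProd A B)) (zdg_compl_adj (RDirProd A B))"
proof -
  interpret A: ring A by (rule assms(1))
  interpret B: ring B by (rule assms(2))
  have "\<one>\<^bsub>A\<^esub> \<noteq> \<zero>\<^bsub>A\<^esub>" "\<one>\<^bsub>B\<^esub> \<noteq> \<zero>\<^bsub>B\<^esub>"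
    using assms(3,4,6,7) A.r_one A.r_null B.r_one B.r_null by metis+
  moreover have "a \<in> zdg_vertices A" "b \<in> zdg_vertices B"
    using assms(3-8) by (auto simp: zdg_vertices_def zero_divisors_def)
  moreover have "a \<noteq> \<one>\<^bsub>A\<^esub>" "b \<noteq> \<one>\<^bsub>B\<^esub>"
    using assms(5,8) calculation(1,2) by auto
  ultimately show ?thesis
    using assms(3-8)
    by (intro not_is_divisor_graph_if_forcing_cycle[of "(\<zero>\<^bsub>A\<^esub>, \<one>\<^bsub>B\<^esub>)" _ "(a, b)"
          "(\<zero>\<^bsub>A\<^esub>, b)" "(\<one>\<^bsub>A\<^esub>, b)" "(a, \<zero>\<^bsub>B\<^esub>)" "(a, \<one>\<^bsub>B\<^esub>)" "(\<one>\<^bsub>A\<^esub>, \<zero>\<^bsub>B\<^esub>)"])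
      (auto simp: zdg_compl_adj_RDirProd zdg_vertices_RDirProd[OF assms(1,2)])
qed

theorem theorem2p2:
  fixes R1 :: "('a, 'm) ring_scheme" and R2 :: "('b, 'n) ring_scheme"
  assumes "principal_ideal_ring R1" and "finite (carrier R1)" and "\<one>\<^bsub>R1\<^esub> \<noteq> \<zero>\<^bsub>R1\<^esub>"
    and "principal_ideal_ring R2" and "finite (carrier R2)" and "\<one>\<^bsub>R2\<^esub> \<noteq> \<zero>\<^bsub>R2\<^esub>"
    and "zdg_diam_zero R1" and "zdg_diam_zero R2"
  shows "is_divisor_graph (zdg_vertices (RDirProd R1 R2)) (zdg_compl_adj (RDirProd R1 R2))
         \<longleftrightarrow> (domain R1 \<or> domain R2)"
proof -
  interpret R1: cring R1
    using assms(1) by (simp add: principal_ideal_ring_def)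
  interpret R2: cring R2
    using assms(4) by (simp add: principal_ideal_ring_def)
  show ?thesis
  proof (cases "domain R1 \<or> domain R2")
    case True
    moreover have "is_divisor_graph (zdg_vertices (RDirProd R1 R2)) (zdg_compl_adj (RDirProd R1 R2))"
      if "domain R1"
      using is_divisor_graph_RDirProd_domain[OF that R2.is_cring assms(6,8,2,5)] .
    moreover have "is_divisor_graph (zdg_vertices (RDirProd R1 R2)) (zdg_compl_adj (RDirProd R1 R2))"
      if "domain R2"
      using is_divisor_graph_RDirProd_domain[OF that R1.is_cring assms(3,7,5,2)]
      by (rule is_divisor_graph_RDirProd_swap[OF R1.ring_axioms R2.ring_axioms assms(3,6)])
    ultimately show ?thesis
      by blast
  next
    case False
    then obtain a b where a: "a \<in> zdg_vertices R1" and b: "b \<in> zdg_vertices R2"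
      using R1.domain_iff_zdg_vertices_empty[OF assms(3)] R2.domain_iff_zdg_vertices_empty[OF assms(6)]
      by blast
    moreover have "a \<in> carrier R1" "a \<noteq> \<zero>\<^bsub>R1\<^esub>" "b \<in> carrier R2" "b \<noteq> \<zero>\<^bsub>R2\<^esub>"
      using a b by (simp_all add: zdg_vertices_def zero_divisors_def)
    moreover have "a \<otimes>\<^bsub>R1\<^esub> a = \<zero>\<^bsub>R1\<^esub>" "b \<otimes>\<^bsub>R2\<^esub> b = \<zero>\<^bsub>R2\<^esub>"
      using R1.diam_zero_mult_eq_zero_iff[OF assms(7)] R2.diam_zero_mult_eq_zero_iff[OF assms(8)]
        a b calculation by blast+
    ultimately show ?thesis
      using False not_is_divisor_graph_RDirProd_square_zero[OF R1.ring_axioms R2.ring_axioms]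
      by blast
  qed
qed

end
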